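(* There exist an environment $E$ and a total preorder $\succeq$ on $\Pi^E$ such that $\succeq\in\mathrm{Ord}_{\mathrm{ONMR}}(E)$ but $\succeq\notin\mathrm{Ord}_{\mathrm{FTR}}(E)$.
   Context: An environment is a tuple $E=(\mathcal S,\mathcal A,\mathcal T,\mathcal I)$ where $\mathcal S,\mathcal A$ are finite nonempty sets, $\mathcal T:\mathcal S\times\mathcal A\to\Delta(\mathcal S)$ and $\mathcal I\in\Delta(\mathcal S)$. A policy is a map $\pi:\mathcal S\to\Delta(\mathcal A)$ (stationary, possibly stochastic); $\Pi^E$ denotes the set of all policies. A trajectory $\xi=(s_0,a_0,s_1,a_1,\dots)\in\Xi:=\mathcal S\times(\mathcal A\times\mathcal S)^\omega$ is generated under $\pi$ by $s_0\sim\mathcal I$, $a_t\sim\pi(s_t)$, $s_{t+1}\sim\mathcal T(s_t,a_t)$; $\mathbb E^\pi_\xi$ denotes expectation under this distribution. An objective-specification formalism $X$ assigns to each environment $E$ a set of objective specifications, each inducing a total preorder $\succeq$ on $\Pi^E$; $\mathrm{Ord}_X(E)$ is the set of total preorders so induced. A specification defining a scalar $J:\Pi^E\to\mathbb R$ induces $\pi_1\succeq\pi_2\iff J(\pi_1)\ge J(\pi_2)$. ONMR: specification $(\mathcal R,f,\gamma)$ with $\mathcal R:\mathcal S\times\mathcal A\times\mathcal S\to\mathbb R$, $f:\mathbb R\to\mathbb R$, $\gamma\in[0,1)$; $J(\pi)=f\big(\mathbb E^\pi_\xi[\sum_{t=0}^\infty\gamma^t\mathcal R(s_t,a_t,s_{t+1})]\big)$.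 FTR: specification $(f)$ with $f:\Xi\to\mathbb R$ Borel measurable (product topology on $\Xi$) such that $\mathbb E^\pi_\xi[f(\xi)]$ is well-defined and finite for every policy; $J(\pi)=\mathbb E^\pi_\xi[f(\xi)]$. *)

theory Defs
  imports "HOL-Probability.Probability"
begin

record ('s, 'a) env =
  St   :: "'s set"
  Ac   :: "'a set"
  Tr   :: "'s \<Rightarrow> 'a \<Rightarrow> 's pmf"
  Init :: "'s pmf"

definition valid_env :: "('s, 'a) env \<Rightarrow> bool" where
  "valid_env E \<longleftrightarrow> finite (St E) \<and> St E \<noteq> {} \<and> finite (Ac E) \<and> Ac E \<noteq> {}
     \<and> set_pmf (Init E) \<subseteq> St E
     \<and> (\<forall>s\<in>St E. \<forall>a\<in>Ac E. set_pmf (Tr E s a) \<subseteq> St E)"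

definition policies :: "('s, 'a) env \<Rightarrow> ('s \<Rightarrow> 'a pmf) set" where
  "policies E = {\<pi>. (\<forall>s\<in>St E. set_pmf (\<pi> s) \<subseteq> Ac E) \<and> (\<forall>s. s \<notin> St E \<longrightarrow> \<pi> s = undefined)}"

(* Trajectories xi = (s0,a0,s1,a1,...) are represented as streams of pairs (s_t, a_t),
   with the product sigma-algebra of the discrete spaces (= Borel sets of the product topology). *)
definition traj_space :: "('s, 'a) env \<Rightarrow> ('s \<times> 'a) stream measure" where
  "traj_space E = stream_space (count_space (St E \<times> Ac E))"

fun pp_from :: "('s, 'a) env \<Rightarrow> ('s \<Rightarrow> 'a pmf) \<Rightarrow> ('s \<times> 'a) list \<Rightarrow> ennreal" where
  "pp_from E \<pi> [] = 1"
| "pp_from E \<pi> [(s, a)] = ennreal (pmf (\<pi> s) a)"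
| "pp_from E \<pi> ((s, a) # (s', a') # rest) =
     ennreal (pmf (\<pi> s) a) * ennreal (pmf (Tr E s a) s') * pp_from E \<pi> ((s', a') # rest)"

fun path_prob :: "('s, 'a) env \<Rightarrow> ('s \<Rightarrow> 'a pmf) \<Rightarrow> ('s \<times> 'a) list \<Rightarrow> ennreal" where
  "path_prob E \<pi> [] = 1"
| "path_prob E \<pi> ((s, a) # rest) = ennreal (pmf (Init E) s) * pp_from E \<pi> ((s, a) # rest)"

definition traj_measure :: "('s, 'a) env \<Rightarrow> ('s \<Rightarrow> 'a pmf) \<Rightarrow> ('s \<times> 'a) stream measure" where
  "traj_measure E \<pi> = (THE M. sets M = sets (traj_space E) \<and> prob_space M \<and>
      (\<forall>xs. emeasure M {\<omega> \<in> space (traj_space E). stake (length xs) \<omega> = xs} = path_prob E \<pi> xs))"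

definition ord_of :: "('s, 'a) env \<Rightarrow> (('s \<Rightarrow> 'a pmf) \<Rightarrow> real) \<Rightarrow> ('s \<Rightarrow> 'a pmf) rel" where
  "ord_of E J = {(\<pi>1, \<pi>2). \<pi>1 \<in> policies E \<and> \<pi>2 \<in> policies E \<and> J \<pi>1 \<ge> J \<pi>2}"

definition disc_return :: "('s \<Rightarrow> 'a \<Rightarrow> 's \<Rightarrow> real) \<Rightarrow> real \<Rightarrow> ('s \<times> 'a) stream \<Rightarrow> real" where
  "disc_return R \<gamma> \<omega> =
     (\<Sum>t. \<gamma> ^ t * R (fst (\<omega> !! t)) (snd (\<omega> !! t)) (fst (\<omega> !! Suc t)))"

definition Ord_ONMR :: "('s, 'a) env \<Rightarrow> ('s \<Rightarrow> 'a pmf) rel set" where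
  "Ord_ONMR E = {ord_of E (\<lambda>\<pi>. f (\<integral>\<omega>. disc_return R \<gamma> \<omega> \<partial>traj_measure E \<pi>))
                  | (R :: 's \<Rightarrow> 'a \<Rightarrow> 's \<Rightarrow> real) (f :: real \<Rightarrow> real) (\<gamma> :: real).
                  0 \<le> \<gamma> \<and> \<gamma> < 1}"

(* FTR: J(pi) = E^pi[f(xi)], f Borel measurable with finite, well-defined expectation
   under every policy (i.e. Lebesgue integrable). *)
definition Ord_FTR :: "('s, 'a) env \<Rightarrow> ('s \<Rightarrow> 'a pmf) rel set" where
  "Ord_FTR E = {ord_of E (\<lambda>\<pi>. \<integral>\<omega>. f \<omega> \<partial>traj_measure E \<pi>)
                 | f. f \<in> borel_measurable (traj_space E) \<and>
                      (\<forall>\<pi>\<in>policies E. integrable (traj_measure E \<pi>) f)}"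

definition total_preorder_on :: "'x set \<Rightarrow> 'x rel \<Rightarrow> bool" where
  "total_preorder_on A r \<longleftrightarrow> preorder_on A r \<and> total_on A r"

end

theory Submission
  imports Defs
begin

text \<open>Take two states: in state 0 the agent plays action 0 with probability p, then moves to the
absorbing state 1. Every trajectory has one of two shapes, so any trajectory objective
E[f(\<xi>)] is affine in p. A policy ordering in which p = 0 and p = 1 tie but p = 1/2 is
strictly better is therefore not of FTR form, while ONMR produces it: with discount 0 and
reward 1 for action 0 in state 0 the expected return is p, and f x = -|x - 1/2| bends it.\<close>

definition cylinder :: "('s, 'a) env \<Rightarrow> ('s \<times> 'a) list \<Rightarrow> ('s \<times> 'a) stream set" where
  "cylinder E xs = {\<omega> \<in> space (traj_space E). stake (length xs) \<omega> = xs}"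

lemma space_traj_space [simp]: "space (traj_space E) = streams (St E \<times> Ac E)"
  by (simp add: traj_space_def space_stream_space)

lemma sstart_iff_stake:
  "\<omega> \<in> streams S \<Longrightarrow> \<omega> \<in> sstart S xs \<longleftrightarrow> stake (length xs) \<omega> = xs"
  by (auto simp add: sstart_eq list_eq_iff_nth_eq)

lemma stake_in_lists: "\<omega> \<in> streams S \<Longrightarrow> stake n \<omega> \<in> lists S"
  by (induction n arbitrary: \<omega>) (auto intro: streams_stl streams_shd)

lemma cylinder_eq_sstart:
  "xs \<in> lists (St E \<times> Ac E) \<Longrightarrow> cylinder E xs = sstart (St E \<times> Ac E) xs"
  using sstart_in_streams[of xs "St E \<times> Ac E"] sstart_iff_stake[of _ "St E \<times> Ac E" xs]
  unfolding cylinder_def by auto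

lemma cylinder_outside_lists:
  "xs \<notin> lists (St E \<times> Ac E) \<Longrightarrow> cylinder E xs = {}"
  unfolding cylinder_def using stake_in_lists[of _ "St E \<times> Ac E" "length xs"] by force

lemma sets_traj_space_sstart:
  assumes "countable (St E \<times> Ac E)"
  shows "sets (traj_space E) =
    sigma_sets (streams (St E \<times> Ac E)) (sstart (St E \<times> Ac E) ` lists (St E \<times> Ac E) \<union> {{}})"
  unfolding traj_space_def using sets_stream_space_sstart[OF assms]
  by (simp add: image_subset_iff sstart_in_streams)

lemma sets_cylinder:
  assumes "countable (St E \<times> Ac E)"
  shows "cylinder E xs \<in> sets (traj_space E)"
  by (cases "xs \<in> lists (St E \<times> Ac E)")
     (simp_all add: cylinder_eq_sstart cylinder_outside_lists sets_traj_space_sstart[OF assms])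

text \<open>Cylinders form an \<inter>-stable generator of the trajectory \<sigma>-algebra, so their
probabilities determine the measure characterized in the definition of traj_measure.\<close>

lemma traj_measure_eqI:
  assumes countable: "countable (St E \<times> Ac E)"
    and sets_M: "sets M = sets (traj_space E)" and "prob_space M"
    and cyl_M: "\<And>xs. emeasure M (cylinder E xs) = path_prob E \<pi> xs"
  shows "traj_measure E \<pi> = M"
proof -
  let ?S = "St E \<times> Ac E"
  let ?G = "sstart ?S ` lists ?S \<union> {{}}"
  have unique: "N = M" if sets_N: "sets N = sets (traj_space E)"
    and cyl_N: "\<And>xs. emeasure N (cylinder E xs) = path_prob E \<pi> xs" for N
  proof (rule measure_eqI_generator_eq[OF Int_stable_sstart])
    show "?G \<subseteq> Pow (streams ?S)"
      by (auto dest: sstart_in_streams del: in_listsD)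
    show "sets N = sigma_sets (streams ?S) ?G" "sets M = sigma_sets (streams ?S) ?G"
      using sets_N sets_M sets_traj_space_sstart[OF countable] by simp_all
    show "emeasure N X = emeasure M X" if "X \<in> ?G" for X
    proof -
      from that consider xs where "X = cylinder E xs" | "X = {}"
        using cylinder_eq_sstart by blast
      then show ?thesis using cyl_N cyl_M by cases auto
    qed
    show "range (\<lambda>_. streams ?S) \<subseteq> ?G" by (auto intro: image_eqI[where x="[]"])
    show "(\<Union>i. streams ?S) = streams ?S" by simp
    show "emeasure N (streams ?S) \<noteq> \<infinity>" for i :: nat
      using cyl_N[of "[]"] by (simp add: cylinder_def)
  qed
  show ?thesis
    unfolding traj_measure_def cylinder_def[symmetric]
  proof (rule the_equality)
    show "sets M = sets (traj_space E) \<and> prob_space M \<and>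
        (\<forall>xs. emeasure M (cylinder E xs) = path_prob E \<pi> xs)"
      using assms by simp
  qed (use unique in blast)
qed

definition coin_env :: "(nat, nat) env" where
  "coin_env = \<lparr>St = {0, 1}, Ac = {0, 1}, Tr = (\<lambda>_ _. return_pmf 1), Init = return_pmf 0\<rparr>"

definition coin_action :: "bool \<Rightarrow> nat" where
  "coin_action b = (if b then 0 else 1)"

definition coin_pmf :: "real \<Rightarrow> nat pmf" where
  "coin_pmf p = map_pmf coin_action (bernoulli_pmf p)"

definition coin_policy :: "real \<Rightarrow> nat \<Rightarrow> nat pmf" where
  "coin_policy p s = (if s = 0 then coin_pmf p else if s = 1 then return_pmf 0 else undefined)"

definition coin_traj :: "bool \<Rightarrow> (nat \<times> nat) stream" where
  "coin_traj b = (0, coin_action b) ## sconst (1, 0)"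

lemma coin_env_simps [simp]:
  "St coin_env = {0, 1}" "Ac coin_env = {0, 1}"
  "Tr coin_env s a = return_pmf 1" "Init coin_env = return_pmf 0"
  by (simp_all add: coin_env_def)

lemma valid_coin_env: "valid_env coin_env"
  by (simp add: valid_env_def)

lemma countable_coin_env: "countable (St coin_env \<times> Ac coin_env)"
  by (simp add: countable_finite)

lemma set_coin_pmf: "set_pmf (coin_pmf p) \<subseteq> {0, 1}"
  by (auto simp: coin_pmf_def coin_action_def)

lemma coin_policy_in_policies: "coin_policy p \<in> policies coin_env"
  using set_coin_pmf by (auto simp: policies_def coin_policy_def)

lemma coin_traj_in_space: "coin_traj b \<in> space (traj_space coin_env)"
  by (auto simp: coin_traj_def coin_action_def intro: sconst_streams)

lemma stake_coin_traj:
  "stake (Suc n) (coin_traj b) = (0, coin_action b) # replicate n (1, 0)"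
  by (simp add: coin_traj_def map_replicate_trivial)

lemma pp_from_coin_absorbed:
  "pp_from coin_env (coin_policy p) ((1, a) # xs) = of_bool ((1, a) # xs = replicate (Suc (length xs)) (1, 0))"
proof (induction xs arbitrary: a)
  case (Cons x xs)
  obtain s' a' where x: "x = (s', a')" by (cases x)
  show ?case
  proof (cases "s' = 1")
    case True
    then show ?thesis using Cons.IH[of a'] by (simp add: x coin_policy_def indicator_def)
  qed (simp add: x coin_policy_def indicator_def)
qed (simp add: coin_policy_def)

lemma path_prob_coin:
  "path_prob coin_env (coin_policy p) ((s, a) # xs) =
     (if s = 0 \<and> xs = replicate (length xs) (1, 0) then pmf (coin_pmf p) a else 0)"
proof (cases xs)
  case (Cons x xs')
  obtain s' a' where x: "x = (s', a')" by (cases x)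
  show ?thesis
  proof (cases "s' = 1")
    case True
    then show ?thesis
      using pp_from_coin_absorbed[of p a' xs'] by (simp add: Cons x coin_policy_def indicator_def)
  qed (simp add: Cons x coin_policy_def indicator_def)
qed (simp add: coin_policy_def indicator_def)

lemma traj_measure_coin:
  "traj_measure coin_env (coin_policy p) = distr (bernoulli_pmf p) (traj_space coin_env) coin_traj"
proof (rule traj_measure_eqI)
  have meas: "coin_traj \<in> measurable (bernoulli_pmf p) (traj_space coin_env)"
    using coin_traj_in_space by simp
  then show prob: "prob_space (distr (bernoulli_pmf p) (traj_space coin_env) coin_traj)"
    by (rule measure_pmf.prob_space_distr)
  show "emeasure (distr (bernoulli_pmf p) (traj_space coin_env) coin_traj) (cylinder coin_env xs) =
      path_prob coin_env (coin_policy p) xs" for xs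
  proof (cases xs)
    case Nil
    then show ?thesis
      using prob_space.emeasure_space_1[OF prob] by (simp add: cylinder_def)
  next
    case (Cons x xs')
    obtain s a where x: "x = (s, a)" by (cases x)
    have "coin_traj -` cylinder coin_env xs = {b. stake (length xs) (coin_traj b) = xs}"
      using coin_traj_in_space by (auto simp: cylinder_def)
    also have "\<dots> = (if s = 0 \<and> xs' = replicate (length xs') (1, 0) then coin_action -` {a} else {})"
      unfolding Cons x length_Cons stake_coin_traj by auto
    finally have preimage: "coin_traj -` cylinder coin_env xs = \<dots>" .
    have action: "emeasure (bernoulli_pmf p) (coin_action -` {a}) = pmf (coin_pmf p) a"
      using emeasure_pmf_single[of "coin_pmf p" a] by (simp add: coin_pmf_def)
    have "emeasure (distr (bernoulli_pmf p) (traj_space coin_env) coin_traj) (cylinder coin_env xs) =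
        emeasure (bernoulli_pmf p) (coin_traj -` cylinder coin_env xs)"
      by (simp add: emeasure_distr[OF meas sets_cylinder[OF countable_coin_env]])
    then show ?thesis
      using action unfolding preimage unfolding Cons x path_prob_coin by simp
  qed
qed (simp_all add: countable_coin_env)

lemma integral_traj_coin:
  assumes "F \<in> borel_measurable (traj_space coin_env)" "0 \<le> p" "p \<le> 1"
  shows "(\<integral>\<omega>. F \<omega> \<partial>traj_measure coin_env (coin_policy p)) =
    F (coin_traj True) * p + F (coin_traj False) * (1 - p)"
  using coin_traj_in_space assms
  by (simp add: traj_measure_coin integral_distr measurable_pmf_measure1)

lemma disc_return_no_discount:
  "disc_return R 0 \<omega> = R (fst (\<omega> !! 0)) (snd (\<omega> !! 0)) (fst (\<omega> !! 1))"
proof -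
  define r where "r t = R (fst (\<omega> !! t)) (snd (\<omega> !! t)) (fst (\<omega> !! Suc t))" for t
  have "disc_return R 0 \<omega> = (\<Sum>t. if t = 0 then r t else 0)"
  proof -
    have "(\<lambda>t. 0 ^ t * r t) = (\<lambda>t. if t = 0 then r t else 0)"
      by (simp add: fun_eq_iff power_0_left)
    then show ?thesis
      unfolding disc_return_def r_def[symmetric] by simp
  qed
  also have "\<dots> = r 0"
    using sums_single[of 0 r] by (simp add: sums_iff)
  finally show ?thesis by (simp add: r_def)
qed

lemma disc_return_no_discount_measurable:
  assumes "countable (St E \<times> Ac E)"
  shows "disc_return R 0 \<in> borel_measurable (traj_space E)"
proof -
  have snth: "(\<lambda>\<omega>. \<omega> !! n) \<in> measurable (traj_space E) (count_space (St E \<times> Ac E))" for n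
    unfolding traj_space_def by (rule measurable_snth)
  have "(\<lambda>\<omega>. R (fst x) (snd x) (fst (\<omega> !! 1))) \<in> borel_measurable (traj_space E)" for x
    using measurable_compose_countable'[OF _ snth[of 1] assms, of "\<lambda>y _. R (fst x) (snd x) (fst y)"]
    by simp
  then show ?thesis
    unfolding disc_return_no_discount
    using measurable_compose_countable'[OF _ snth[of 0] assms, of "\<lambda>x \<omega>. R (fst x) (snd x) (fst (\<omega> !! 1))"]
    by simp
qed

lemma total_preorder_on_ord_of: "total_preorder_on (policies E) (ord_of E J)"
  by (auto simp: total_preorder_on_def preorder_on_def refl_on_def trans_on_def total_on_def ord_of_def)

lemma ord_of_coin_notin_Ord_FTR:
  assumes "J (coin_policy 0) = J (coin_policy 1)" "J (coin_policy 0) < J (coin_policy (1/2))"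
  shows "ord_of coin_env J \<notin> Ord_FTR coin_env"
proof
  assume "ord_of coin_env J \<in> Ord_FTR coin_env"
  then obtain F where F: "F \<in> borel_measurable (traj_space coin_env)"
    and eq: "ord_of coin_env J = ord_of coin_env (\<lambda>\<pi>. \<integral>\<omega>. F \<omega> \<partial>traj_measure coin_env \<pi>)"
    unfolding Ord_FTR_def by blast
  define G where "G \<pi> = (\<integral>\<omega>. F \<omega> \<partial>traj_measure coin_env \<pi>)" for \<pi>
  have G: "G (coin_policy p) = F (coin_traj True) * p + F (coin_traj False) * (1 - p)"
    if "0 \<le> p" "p \<le> 1" for p
    unfolding G_def using integral_traj_coin[OF F that] .
  have iff: "J (coin_policy p) \<ge> J (coin_policy q) \<longleftrightarrow> G (coin_policy p) \<ge> G (coin_policy q)" for p q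
    using arg_cong[OF eq, of "\<lambda>r. (coin_policy p, coin_policy q) \<in> r"] coin_policy_in_policies
    by (simp add: ord_of_def G_def)
  have "G (coin_policy 0) = G (coin_policy 1)"
    using iff[of 0 1] iff[of 1 0] assms(1) by auto
  moreover have "G (coin_policy 0) < G (coin_policy (1/2))"
    using iff[where p = 0 and q = "1/2"] assms(2) by (meson not_le)
  ultimately show False
    using G[of 0] G[of 1] G[of "1/2"] by simp
qed

definition coin_reward :: "nat \<Rightarrow> nat \<Rightarrow> nat \<Rightarrow> real" where
  "coin_reward s a s' = of_bool (s = 0 \<and> a = 0)"

lemma expected_return_coin:
  assumes "0 \<le> p" "p \<le> 1"
  shows "(\<integral>\<omega>. disc_return coin_reward 0 \<omega> \<partial>traj_measure coin_env (coin_policy p)) = p"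
proof -
  have "disc_return coin_reward 0 (coin_traj b) = of_bool b" for b
    by (simp add: disc_return_no_discount coin_traj_def coin_action_def coin_reward_def)
  then show ?thesis
    using integral_traj_coin[OF disc_return_no_discount_measurable[OF countable_coin_env] assms]
    by simp
qed

theorem mainTheorem14:
  shows "\<exists>(E :: (nat, nat) env) r. valid_env E \<and> total_preorder_on (policies E) r \<and>
           r \<in> Ord_ONMR E \<and> r \<notin> Ord_FTR E"
proof -
  define f :: "real \<Rightarrow> real" where "f x = - \<bar>x - 1/2\<bar>" for x
  define J where "J \<pi> = f (\<integral>\<omega>. disc_return coin_reward 0 \<omega> \<partial>traj_measure coin_env \<pi>)" for \<pi>
  have "ord_of coin_env J \<in> Ord_ONMR coin_env"
    unfolding Ord_ONMR_def J_def by (intro CollectI exI[of _ coin_reward] exI[of _ f] exI[of _ 0]) simp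
  moreover have "ord_of coin_env J \<notin> Ord_FTR coin_env"
    by (rule ord_of_coin_notin_Ord_FTR) (simp_all add: J_def f_def expected_return_coin)
  ultimately show ?thesis
    using valid_coin_env total_preorder_on_ord_of by blast
qed

end
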